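(* Let a shallow network with neurons $(V_0,V_1,V_2)$ and activation $\psi$ be given and let $\theta$ be a redundant parameter. Then there exist $\tilde V_1\subseteq V_1$ and an efficient parameter $\tilde\theta$ of the pruned network with neurons $(V_0,\tilde V_1,V_2)$ and activation $\psi$ such that $\Psi_\theta(x)=\Psi_{\tilde\theta}(x)$ for all $x\in\mathcal{X}$. Furthermore, if $\#V_2=1$ and $\theta$ is a critical point of a cost $J_{\mathbf m}(\vartheta)=\mathbb{E}_{\mathbf m}[\ell(\Psi_\vartheta(X),Y)]$ (for some loss $\ell$ and expectation $\mathbb{E}_{\mathbf m}$ induced by a distribution $\mathbb{P}_{\mathbf m}$, with $\ell$ and $\psi$ regular enough that derivatives may be moved into $\mathbb{E}_{\mathbf m}$), then $\tilde\theta$ is a critical point of the corresponding cost for the pruned network.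
   Context: Shallow network: finite pairwise disjoint $V_0,V_1,V_2$, activation $\psi$; $E=(V_0\times V_1)\cup(V_1\times V_2)$; parameters $\theta=(w,\beta)\in\mathbb{R}^E\times\mathbb{R}^{V_1\cup V_2}$; response $(\Psi_\theta(x))_l=\beta_l+\sum_{j\in V_1}\psi(\beta_j+\sum_{i\in V_0}x_iw_{ij})w_{jl}$; $w_{j\bullet}=(w_{jl})_{l\in V_2}$. $\mathcal{X}\subseteq\mathbb{R}^{V_0}$ is the support of the distribution of the input $X$. $\theta$ is efficient if (a) $w_{k\bullet}\neq0$ for all $k\in V_1$ and (b) the only $\lambda$ with $\lambda_\emptyset+\sum_{j\in V_1}\lambda_j\psi(\beta_j+\sum_ix_iw_{ij})=0$ for all $x\in\mathcal{X}$ is $\lambda\equiv0$; otherwise redundant. A network with no hidden neurons has only the output bias as parameter (and such a parameter is efficient). *)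

theory Defs
  imports "HOL-Probability.Probability"
begin

text \<open>A parameter theta = (w, beta):
  w i j is the weight on edge (i,j), beta j the bias of neuron j.  Only the values
  on E = (V0 x V1) u (V1 x V2) resp. V1 u V2 are relevant.\<close>

type_synonym 'n param = "('n \<Rightarrow> 'n \<Rightarrow> real) \<times> ('n \<Rightarrow> real)"

definition hidden_out :: "'n set \<Rightarrow> (real \<Rightarrow> real) \<Rightarrow> 'n param \<Rightarrow> 'n \<Rightarrow> ('n \<Rightarrow> real) \<Rightarrow> real" where
  "hidden_out V0 \<psi> \<theta> j x = \<psi> (snd \<theta> j + (\<Sum>i\<in>V0. x i * fst \<theta> i j))"

definition response :: "'n set \<Rightarrow> 'n set \<Rightarrow> 'n set \<Rightarrow> (real \<Rightarrow> real) \<Rightarrow> 'n param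
    \<Rightarrow> ('n \<Rightarrow> real) \<Rightarrow> ('n \<Rightarrow> real)" where
  "response V0 V1 V2 \<psi> \<theta> x =
     (\<lambda>l\<in>V2. snd \<theta> l + (\<Sum>j\<in>V1. hidden_out V0 \<psi> \<theta> j x * fst \<theta> j l))"

text \<open>Efficiency with respect to the input support X (a network without hidden neurons
  is efficient by convention).\<close>
definition efficient :: "'n set \<Rightarrow> 'n set \<Rightarrow> 'n set \<Rightarrow> (real \<Rightarrow> real) \<Rightarrow> ('n \<Rightarrow> real) set
    \<Rightarrow> 'n param \<Rightarrow> bool" where
  "efficient V0 V1 V2 \<psi> \<X> \<theta> \<longleftrightarrow>
     V1 = {} \<or>
     ((\<forall>k\<in>V1. \<exists>l\<in>V2. fst \<theta> k l \<noteq> 0) \<and>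
      (\<forall>(c0::real) (c::'n \<Rightarrow> real).
          (\<forall>x\<in>\<X>. c0 + (\<Sum>j\<in>V1. c j * hidden_out V0 \<psi> \<theta> j x) = 0)
          \<longrightarrow> c0 = 0 \<and> (\<forall>j\<in>V1. c j = 0)))"

definition redundant :: "'n set \<Rightarrow> 'n set \<Rightarrow> 'n set \<Rightarrow> (real \<Rightarrow> real) \<Rightarrow> ('n \<Rightarrow> real) set
    \<Rightarrow> 'n param \<Rightarrow> bool" where
  "redundant V0 V1 V2 \<psi> \<X> \<theta> \<longleftrightarrow> \<not> efficient V0 V1 V2 \<psi> \<X> \<theta>"

text \<open>Support of the distribution of the input X = fst under M (inputs live in R^{V0},
  represented as extensional functions on V0; neighbourhoods are sup-norm balls).\<close>
definition input_support :: "(('n \<Rightarrow> real) \<times> 'y) measure \<Rightarrow> 'n set \<Rightarrow> ('n \<Rightarrow> real) set" where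
  "input_support M V0 =
     {x \<in> space (PiM V0 (\<lambda>_. borel)). \<forall>e>0.
        emeasure M {z \<in> space M. \<forall>i\<in>V0. \<bar>fst z i - x i\<bar> < e} > 0}"

definition cost :: "'n set \<Rightarrow> 'n set \<Rightarrow> 'n set \<Rightarrow> (real \<Rightarrow> real) \<Rightarrow> (('n \<Rightarrow> real) \<Rightarrow> 'y \<Rightarrow> real)
    \<Rightarrow> (('n \<Rightarrow> real) \<times> 'y) measure \<Rightarrow> 'n param \<Rightarrow> real" where
  "cost V0 V1 V2 \<psi> loss M \<theta> = (\<integral>z. loss (response V0 V1 V2 \<psi> \<theta> (fst z)) (snd z) \<partial>M)"

datatype 'n coord = W 'n 'n | B 'n

definition coords :: "'n set \<Rightarrow> 'n set \<Rightarrow> 'n set \<Rightarrow> 'n coord set" where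
  "coords V0 V1 V2 = {W i j |i j. (i, j) \<in> (V0 \<times> V1) \<union> (V1 \<times> V2)} \<union> B ` (V1 \<union> V2)"

fun shift :: "'n param \<Rightarrow> 'n coord \<Rightarrow> real \<Rightarrow> 'n param" where
  "shift \<theta> (W i j) t = ((fst \<theta>)(i := (fst \<theta> i)(j := fst \<theta> i j + t)), snd \<theta>)"
| "shift \<theta> (B j) t = (fst \<theta>, (snd \<theta>)(j := snd \<theta> j + t))"

definition critical_point :: "'n set \<Rightarrow> 'n set \<Rightarrow> 'n set \<Rightarrow> (real \<Rightarrow> real)
    \<Rightarrow> (('n \<Rightarrow> real) \<Rightarrow> 'y \<Rightarrow> real) \<Rightarrow> (('n \<Rightarrow> real) \<times> 'y) measure \<Rightarrow> 'n param \<Rightarrow> bool" where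
  "critical_point V0 V1 V2 \<psi> loss M \<theta> \<longleftrightarrow>
     (\<forall>c\<in>coords V0 V1 V2.
        ((\<lambda>t. cost V0 V1 V2 \<psi> loss M (shift \<theta> c t)) has_real_derivative 0) (at 0))"

definition deriv_interchange :: "'n set \<Rightarrow> 'n set \<Rightarrow> 'n set \<Rightarrow> (real \<Rightarrow> real)
    \<Rightarrow> (('n \<Rightarrow> real) \<Rightarrow> 'y \<Rightarrow> real) \<Rightarrow> (('n \<Rightarrow> real) \<times> 'y) measure \<Rightarrow> bool" where
  "deriv_interchange V0 V1 V2 \<psi> loss M \<longleftrightarrow>
     (\<forall>\<theta>. \<forall>c\<in>coords V0 V1 V2. \<exists>D.
        (\<forall>z\<in>space M. ((\<lambda>t. loss (response V0 V1 V2 \<psi> (shift \<theta> c t) (fst z)) (snd z))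
                         has_real_derivative D z) (at 0)) \<and>
        integrable M D \<and>
        ((\<lambda>t. cost V0 V1 V2 \<psi> loss M (shift \<theta> c t)) has_real_derivative (\<integral>z. D z \<partial>M)) (at 0))"

end

theory Submission
  imports Defs
begin

text \<open>If \<theta> is redundant, either some hidden neuron has no outgoing weight and can be dropped,
  or on the input support the constant 1 and the hidden outputs satisfy a nontrivial linear
  relation; then a neuron k with nonzero coefficient is an affine combination of the others
  there, and its contribution can be absorbed into the output biases and the outgoing weights of
  the remaining neurons. Both steps preserve the response on the support and leave the incoming
  weights and biases of the surviving neurons untouched, so iterating them ends in an efficient
  parameter. Dropping the neurons that are silent in \<theta> first ensures that every survivor has
  nonzero outgoing weight in \<theta> itself.

  With a single output neuron, shifting one coordinate of the pruned parameter changes the output,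
  for every input, by a fixed multiple \<kappa> of the change caused by shifting the same coordinate of
  \<theta>: \<kappa> is the ratio of the outgoing weights of the neuron concerned, or 1 for the outgoing
  coordinates. As the two networks agree almost surely (the input lies in its support almost
  surely), the chain rule shows that the pointwise derivatives of the loss differ by the factor \<kappa>,
  hence so do their expectations, the partial derivatives of the cost.\<close>

definition same_hidden_layer :: "'n set \<Rightarrow> 'n set \<Rightarrow> 'n param \<Rightarrow> 'n param \<Rightarrow> bool" where
  "same_hidden_layer V0 V \<theta> \<theta>' \<longleftrightarrow> (\<forall>j\<in>V. snd \<theta>' j = snd \<theta> j \<and> (\<forall>i\<in>V0. fst \<theta>' i j = fst \<theta> i j))"

lemma hidden_out_cong:
  "same_hidden_layer V0 V \<theta> \<theta>' \<Longrightarrow> j \<in> V \<Longrightarrow> hidden_out V0 \<psi> \<theta>' j x = hidden_out V0 \<psi> \<theta> j x"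
  by (simp add: same_hidden_layer_def hidden_out_def)

lemma same_hidden_layer_refl [simp]: "same_hidden_layer V0 V \<theta> \<theta>"
  by (simp add: same_hidden_layer_def)

lemma same_hidden_layer_trans:
  "same_hidden_layer V0 V \<theta> \<theta>' \<Longrightarrow> same_hidden_layer V0 V' \<theta>' \<theta>'' \<Longrightarrow> V' \<subseteq> V
   \<Longrightarrow> same_hidden_layer V0 V' \<theta> \<theta>''"
  by (auto simp: same_hidden_layer_def)

definition active_neurons :: "'n set \<Rightarrow> 'n set \<Rightarrow> 'n param \<Rightarrow> 'n set" where
  "active_neurons V1 V2 \<theta> = {k \<in> V1. \<exists>l\<in>V2. fst \<theta> k l \<noteq> 0}"

lemma response_active_neurons:
  assumes "finite V1"
  shows "response V0 V1 V2 \<psi> \<theta> x = response V0 (active_neurons V1 V2 \<theta>) V2 \<psi> \<theta> x"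
  unfolding response_def
proof (rule restrict_ext)
  fix l assume "l \<in> V2"
  then show "snd \<theta> l + (\<Sum>j\<in>V1. hidden_out V0 \<psi> \<theta> j x * fst \<theta> j l)
           = snd \<theta> l + (\<Sum>j\<in>active_neurons V1 V2 \<theta>. hidden_out V0 \<psi> \<theta> j x * fst \<theta> j l)"
    using assms by (auto simp: active_neurons_def intro!: sum.mono_neutral_right)
qed

text \<open>Given a relation c0 + sum_j c_j h_j = 0 between the hidden outputs h_j with c_k \<noteq> 0, the
  contribution h_k w_kl of neuron k equals -(c0 + sum_(j \<noteq> k) c_j h_j) w_kl / c_k.\<close>
definition absorb_neuron :: "'n set \<Rightarrow> 'n set \<Rightarrow> 'n \<Rightarrow> real \<Rightarrow> ('n \<Rightarrow> real) \<Rightarrow> 'n param \<Rightarrow> 'n param" where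
  "absorb_neuron V1 V2 k c0 c \<theta> =
     (\<lambda>i j. if i \<in> V1 - {k} \<and> j \<in> V2 then fst \<theta> i j - c i / c k * fst \<theta> k j else fst \<theta> i j,
      \<lambda>j. if j \<in> V2 then snd \<theta> j - c0 / c k * fst \<theta> k j else snd \<theta> j)"

lemma same_hidden_layer_absorb_neuron:
  "V0 \<inter> V1 = {} \<Longrightarrow> V1 \<inter> V2 = {} \<Longrightarrow> same_hidden_layer V0 V1 \<theta> (absorb_neuron V1 V2 k c0 c \<theta>)"
  by (auto simp: same_hidden_layer_def absorb_neuron_def)

lemma response_absorb_neuron:
  assumes "finite V1" "V0 \<inter> V1 = {}" "V1 \<inter> V2 = {}" "k \<in> V1" "c k \<noteq> 0"
    and rel: "c0 + (\<Sum>j\<in>V1. c j * hidden_out V0 \<psi> \<theta> j x) = 0"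
  shows "response V0 V1 V2 \<psi> \<theta> x = response V0 (V1 - {k}) V2 \<psi> (absorb_neuron V1 V2 k c0 c \<theta>) x"
  unfolding response_def
proof (rule restrict_ext)
  fix l assume l: "l \<in> V2"
  define \<theta>' where "\<theta>' = absorb_neuron V1 V2 k c0 c \<theta>"
  define h where "h j = hidden_out V0 \<psi> \<theta> j x" for j
  define S where "S = (\<Sum>j\<in>V1 - {k}. c j * h j)"
  have "(\<Sum>j\<in>V1. c j * h j) = c k * h k + S"
    unfolding S_def using assms(1,4) by (rule sum.remove)
  then have S: "S = - c0 - c k * h k"
    using rel unfolding h_def by linarith
  have summand: "hidden_out V0 \<psi> \<theta>' j x * fst \<theta>' j l
      = h j * fst \<theta> j l - fst \<theta> k l / c k * (c j * h j)" if "j \<in> V1 - {k}" for j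
  proof -
    have out: "hidden_out V0 \<psi> \<theta>' j x = h j"
      using that hidden_out_cong[OF same_hidden_layer_absorb_neuron[OF assms(2,3)]]
      by (simp add: \<theta>'_def h_def)
    have weight: "fst \<theta>' j l = fst \<theta> j l - c j / c k * fst \<theta> k l"
      using that l by (simp add: \<theta>'_def absorb_neuron_def)
    show ?thesis unfolding out weight by (simp add: algebra_simps)
  qed
  have "(\<Sum>j\<in>V1 - {k}. hidden_out V0 \<psi> \<theta>' j x * fst \<theta>' j l)
      = (\<Sum>j\<in>V1 - {k}. h j * fst \<theta> j l) - fst \<theta> k l / c k * S"
    by (simp add: summand S_def sum_subtractf sum_distrib_left)
  also have "\<dots> = (\<Sum>j\<in>V1 - {k}. h j * fst \<theta> j l) + h k * fst \<theta> k l + c0 / c k * fst \<theta> k l"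
    using assms(5) unfolding S by (simp add: field_simps)
  also have "\<dots> = (\<Sum>j\<in>V1. h j * fst \<theta> j l) + c0 / c k * fst \<theta> k l"
    using sum.remove[OF assms(1,4), of "\<lambda>j. h j * fst \<theta> j l"] by simp
  finally have "(\<Sum>j\<in>V1 - {k}. hidden_out V0 \<psi> \<theta>' j x * fst \<theta>' j l)
      = (\<Sum>j\<in>V1. h j * fst \<theta> j l) + c0 / c k * fst \<theta> k l" .
  moreover have "snd \<theta>' l = snd \<theta> l - c0 / c k * fst \<theta> k l"
    using l by (simp add: \<theta>'_def absorb_neuron_def)
  ultimately show "snd \<theta> l + (\<Sum>j\<in>V1. hidden_out V0 \<psi> \<theta> j x * fst \<theta> j l)
      = snd \<theta>' l + (\<Sum>j\<in>V1 - {k}. hidden_out V0 \<psi> \<theta>' j x * fst \<theta>' j l)"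
    by (simp add: h_def)
qed

lemma efficient_pruning_same_hidden_layer:
  fixes X :: "('n \<Rightarrow> real) set" and \<theta> :: "'n param"
  assumes "finite V1" "V0 \<inter> V1 = {}" "V1 \<inter> V2 = {}"
  shows "\<exists>V1' \<theta>'. V1' \<subseteq> V1 \<and> efficient V0 V1' V2 \<psi> X \<theta>'
     \<and> (\<forall>x\<in>X. response V0 V1 V2 \<psi> \<theta> x = response V0 V1' V2 \<psi> \<theta>' x)
     \<and> same_hidden_layer V0 V1' \<theta> \<theta>'"
  using assms
proof (induction V1 arbitrary: \<theta> rule: finite_psubset_induct)
  case (psubset V1)
  have recurse: ?case
    if sub: "V \<subset> V1" and hid: "same_hidden_layer V0 V1 \<theta> \<phi>"
      and resp: "\<forall>x\<in>X. response V0 V1 V2 \<psi> \<theta> x = response V0 V V2 \<psi> \<phi> x" for V \<phi>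
  proof -
    have "V0 \<inter> V = {}" "V \<inter> V2 = {}"
      using psubset.prems sub by auto
    then obtain V1' \<theta>' where "V1' \<subseteq> V" "efficient V0 V1' V2 \<psi> X \<theta>'"
      "\<forall>x\<in>X. response V0 V V2 \<psi> \<phi> x = response V0 V1' V2 \<psi> \<theta>' x"
      and hid': "same_hidden_layer V0 V1' \<phi> \<theta>'"
      using psubset.IH[OF sub, where \<theta> = \<phi>] by blast
    moreover from this(1) sub have "same_hidden_layer V0 V1' \<theta> \<theta>'"
      using same_hidden_layer_trans[OF hid hid'] by blast
    ultimately show ?thesis
      using sub resp by (intro exI[of _ V1'] exI[of _ \<theta>']) auto
  qed
  consider (efficient) "efficient V0 V1 V2 \<psi> X \<theta>"
    | (inactive) "active_neurons V1 V2 \<theta> \<subset> V1"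
    | (dependent) c0 c where "\<forall>x\<in>X. c0 + (\<Sum>j\<in>V1. c j * hidden_out V0 \<psi> \<theta> j x) = 0"
        "\<not> (c0 = 0 \<and> (\<forall>j\<in>V1. c j = 0))"
  proof -
    have "active_neurons V1 V2 \<theta> \<subseteq> V1"
      by (auto simp: active_neurons_def)
    moreover have "active_neurons V1 V2 \<theta> = V1 \<longleftrightarrow> (\<forall>k\<in>V1. \<exists>l\<in>V2. fst \<theta> k l \<noteq> 0)"
      by (auto simp: active_neurons_def)
    ultimately show thesis
      using that unfolding efficient_def by blast
  qed
  then show ?case
  proof cases
    case efficient
    then show ?thesis
      by (intro exI[of _ V1] exI[of _ \<theta>]) simp
  next
    case inactive
    then show ?thesis
      using response_active_neurons[OF psubset.hyps(1)] by (intro recurse) auto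
  next
    case (dependent c0 c)
    show ?thesis
    proof (cases "\<forall>j\<in>V1. c j = 0")
      case True
      with dependent have "X = {}" by simp
      then show ?thesis
        by (intro exI[of _ "{}"] exI[of _ \<theta>]) (simp add: efficient_def)
    next
      case False
      then obtain k where "k \<in> V1" "c k \<noteq> 0" by blast
      then show ?thesis
        using psubset.hyps psubset.prems dependent(1)
        by (intro recurse[of "V1 - {k}" "absorb_neuron V1 V2 k c0 c \<theta>"])
          (auto simp: same_hidden_layer_absorb_neuron response_absorb_neuron)
    qed
  qed
qed

lemma efficient_pruning:
  fixes X :: "('n \<Rightarrow> real) set" and \<theta> :: "'n param"
  assumes "finite V1" "V0 \<inter> V1 = {}" "V1 \<inter> V2 = {}"
  obtains V1' \<theta>' where "V1' \<subseteq> V1" "efficient V0 V1' V2 \<psi> X \<theta>'"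
    "\<And>x. x \<in> X \<Longrightarrow> response V0 V1 V2 \<psi> \<theta> x = response V0 V1' V2 \<psi> \<theta>' x"
    "same_hidden_layer V0 V1' \<theta> \<theta>'" "\<And>j. j \<in> V1' \<Longrightarrow> \<exists>l\<in>V2. fst \<theta> j l \<noteq> 0"
proof -
  let ?A = "active_neurons V1 V2 \<theta>"
  have "finite ?A" "V0 \<inter> ?A = {}" "?A \<inter> V2 = {}"
    using assms by (auto simp: active_neurons_def)
  from efficient_pruning_same_hidden_layer[OF this, of \<psi> X \<theta>]
  obtain V1' \<theta>' where "V1' \<subseteq> ?A" "efficient V0 V1' V2 \<psi> X \<theta>'"
    "\<forall>x\<in>X. response V0 ?A V2 \<psi> \<theta> x = response V0 V1' V2 \<psi> \<theta>' x" "same_hidden_layer V0 V1' \<theta> \<theta>'"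
    by blast
  then show ?thesis
    using response_active_neurons[OF assms(1), of V0 V2 \<psi> \<theta>]
    by (intro that) (auto simp: active_neurons_def)
qed

lemma AE_input_support:
  fixes M :: "(('n \<Rightarrow> real) \<times> 'y) measure"
  assumes fin: "finite V0" and [measurable]: "fst \<in> M \<rightarrow>\<^sub>M PiM V0 (\<lambda>_. borel)"
  shows "AE z in M. fst z \<in> input_support M V0"
proof -
  txt \<open>The complement of the support is covered by the countably many null balls with rational
    centre and radius 1 / (n + 1).\<close>
  define ball where "ball q r = {z \<in> space M. \<forall>i\<in>V0. \<bar>fst z i - q i\<bar> < r}"
    for q :: "'n \<Rightarrow> real" and r :: real
  have ball_sets: "ball q r \<in> sets M" for q r
    unfolding ball_def using fin by measurable
  define C where "C = {(q, n). q \<in> PiE V0 (\<lambda>_. \<rat>) \<and> emeasure M (ball q (1 / Suc n)) = 0}"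
  have "countable C"
  proof (rule countable_subset)
    show "C \<subseteq> PiE V0 (\<lambda>_. \<rat>) \<times> (UNIV :: nat set)" by (auto simp: C_def)
    show "countable (PiE V0 (\<lambda>_. \<rat>) \<times> (UNIV :: nat set))"
      using fin by (intro countable_SIGMA countable_PiE) (auto simp: countable_rat)
  qed
  then have null: "(\<Union>(q, n)\<in>C. ball q (1 / Suc n)) \<in> null_sets M"
    by (intro null_sets_UN') (auto simp: C_def ball_sets null_setsI)
  show ?thesis
  proof (rule AE_I'[OF null], safe)
    fix z assume z: "z \<in> space M" and "fst z \<notin> input_support M V0"
    moreover have "fst z \<in> space (PiM V0 (\<lambda>_. borel))"
      using z measurable_space[of fst M "PiM V0 (\<lambda>_. borel)"] by simp
    ultimately obtain e where "e > 0" and null_ball: "emeasure M (ball (fst z) e) = 0"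
      unfolding input_support_def ball_def by (auto simp: not_gr_zero)
    then obtain n :: nat where n: "1 / Suc n < e / 2"
      by (metis half_gt_zero_iff nat_approx_posE One_nat_def)
    have "\<forall>i\<in>V0. \<exists>r\<in>\<rat>. fst z i < r \<and> r < fst z i + 1 / Suc n"
      by (auto intro!: Rats_dense_in_real)
    then obtain r where r: "\<And>i. i \<in> V0 \<Longrightarrow> r i \<in> \<rat> \<and> fst z i < r i \<and> r i < fst z i + 1 / Suc n"
      by metis
    define q where "q = restrict r V0"
    have q: "q \<in> PiE V0 (\<lambda>_. \<rat>)"
      using r by (simp add: q_def)
    have near: "\<forall>i\<in>V0. \<bar>fst z i - q i\<bar> < 1 / Suc n"
      using r by (force simp: q_def abs_less_iff)
    have "ball q (1 / Suc n) \<subseteq> ball (fst z) e"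
      using near n unfolding ball_def by (force simp: abs_less_iff)
    then have "(q, n) \<in> C"
      using q null_ball emeasure_mono[OF _ ball_sets, of "ball q (1 / Suc n)" "fst z" e]
      by (auto simp: C_def)
    moreover have "z \<in> ball q (1 / Suc n)"
      using z near unfolding ball_def by simp
    ultimately show "z \<in> (\<Union>(q, n)\<in>C. ball q (1 / Suc n))" by blast
  qed
qed

lemma shift_zero [simp]: "shift \<theta> c 0 = \<theta>"
  by (cases c) simp_all

definition output_perturbation :: "'n set \<Rightarrow> 'n set \<Rightarrow> 'n set \<Rightarrow> (real \<Rightarrow> real) \<Rightarrow> 'n param
    \<Rightarrow> 'n coord \<Rightarrow> 'n \<Rightarrow> ('n \<Rightarrow> real) \<Rightarrow> real \<Rightarrow> real" where
  "output_perturbation V0 V1 V2 \<psi> \<theta> c l x t =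
     response V0 V1 V2 \<psi> (shift \<theta> c t) x l - response V0 V1 V2 \<psi> \<theta> x l"

lemma response_shift_single_output:
  "V2 = {l} \<Longrightarrow> response V0 V1 V2 \<psi> (shift \<theta> c t) x
     = (response V0 V1 V2 \<psi> \<theta> x)(l := response V0 V1 V2 \<psi> \<theta> x l + output_perturbation V0 V1 V2 \<psi> \<theta> c l x t)"
  by (auto simp: output_perturbation_def response_def fun_eq_iff)

lemma output_perturbation_eq:
  assumes "l \<in> V2"
  shows "output_perturbation V0 V1 V2 \<psi> \<theta> c l x t = snd (shift \<theta> c t) l - snd \<theta> l
     + (\<Sum>k\<in>V1. hidden_out V0 \<psi> (shift \<theta> c t) k x * fst (shift \<theta> c t) k l
               - hidden_out V0 \<psi> \<theta> k x * fst \<theta> k l)"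
  using assms by (simp add: output_perturbation_def response_def sum_subtractf)

definition incoming_coord :: "'n set \<Rightarrow> 'n \<Rightarrow> 'n coord \<Rightarrow> bool" where
  "incoming_coord V0 j c \<longleftrightarrow> c = B j \<or> (\<exists>i\<in>V0. c = W i j)"

lemma coords_mono: "V1' \<subseteq> V1 \<Longrightarrow> coords V0 V1' V2 \<subseteq> coords V0 V1 V2"
  unfolding coords_def by blast

lemma coords_single_output_cases:
  assumes "c \<in> coords V0 V1 {l}"
  obtains (incoming) j where "j \<in> V1" "incoming_coord V0 j c"
    | (outgoing) j where "j \<in> V1" "c = W j l"
    | (output_bias) "c = B l"
  using assms unfolding coords_def incoming_coord_def by blast

lemma same_hidden_layer_shift:
  "same_hidden_layer V0 V \<theta> \<theta>' \<Longrightarrow> same_hidden_layer V0 V (shift \<theta> c t) (shift \<theta>' c t)"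
  by (cases c) (auto simp: same_hidden_layer_def)

lemma hidden_out_shift_other:
  "\<not> incoming_coord V0 k c \<Longrightarrow> hidden_out V0 \<psi> (shift \<theta> c t) k x = hidden_out V0 \<psi> \<theta> k x"
  by (cases c) (auto simp: incoming_coord_def hidden_out_def intro!: arg_cong[where f = \<psi>] sum.cong)

lemma output_perturbation_incoming:
  assumes "finite V1" "j \<in> V1" "l \<in> V2" "V0 \<inter> V1 = {}" "V1 \<inter> V2 = {}" "incoming_coord V0 j c"
  shows "output_perturbation V0 V1 V2 \<psi> \<theta> c l x t
     = (hidden_out V0 \<psi> (shift \<theta> c t) j x - hidden_out V0 \<psi> \<theta> j x) * fst \<theta> j l"
proof -
  let ?\<theta>t = "shift \<theta> c t"
  have out: "fst ?\<theta>t k l = fst \<theta> k l" if "k \<in> V1" for k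
    using assms(4,6) that by (auto simp: incoming_coord_def)
  have "hidden_out V0 \<psi> ?\<theta>t k x = hidden_out V0 \<psi> \<theta> k x" if "k \<noteq> j" for k
    using assms(6) that by (intro hidden_out_shift_other) (auto simp: incoming_coord_def)
  with out have "(\<Sum>k\<in>V1 - {j}. hidden_out V0 \<psi> ?\<theta>t k x * fst ?\<theta>t k l - hidden_out V0 \<psi> \<theta> k x * fst \<theta> k l) = 0"
    by (intro sum.neutral) auto
  moreover have "snd ?\<theta>t l = snd \<theta> l"
    using assms(2,3,5,6) by (auto simp: incoming_coord_def)
  ultimately show ?thesis
    using assms(1-3) out by (simp add: output_perturbation_eq sum.remove[of V1 j] algebra_simps)
qed

lemma output_perturbation_outgoing:
  assumes "finite V1" "j \<in> V1" "l \<in> V2" "V0 \<inter> V1 = {}"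
  shows "output_perturbation V0 V1 V2 \<psi> \<theta> (W j l) l x t = hidden_out V0 \<psi> \<theta> j x * t"
proof -
  have "hidden_out V0 \<psi> (shift \<theta> (W j l) t) k x = hidden_out V0 \<psi> \<theta> k x" for k
    using assms(2,4) by (intro hidden_out_shift_other) (auto simp: incoming_coord_def)
  then show ?thesis
    using assms(1-3) by (simp add: output_perturbation_eq sum.remove[of V1 j] algebra_simps)
qed

lemma output_perturbation_output_bias:
  assumes "l \<in> V2" "V1 \<inter> V2 = {}"
  shows "output_perturbation V0 V1 V2 \<psi> \<theta> (B l) l x t = t"
proof -
  have "hidden_out V0 \<psi> (shift \<theta> (B l) t) k x = hidden_out V0 \<psi> \<theta> k x" if "k \<in> V1" for k
    using assms that by (intro hidden_out_shift_other) (auto simp: incoming_coord_def)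
  then show ?thesis
    using assms(1) by (simp add: output_perturbation_eq)
qed

lemma hidden_out_shift_incoming:
  assumes "finite V0" "incoming_coord V0 j c"
  obtains a where "\<And>t. hidden_out V0 \<psi> (shift \<theta> c t) j x = \<psi> (snd \<theta> j + (\<Sum>i\<in>V0. x i * fst \<theta> i j) + a * t)"
  using assms(2) unfolding incoming_coord_def
proof (elim disjE bexE)
  assume "c = B j"
  then show thesis
    by (intro that[of 1]) (simp add: hidden_out_def algebra_simps)
next
  fix i assume i: "i \<in> V0" and c: "c = W i j"
  have "(\<Sum>i'\<in>V0. x i' * fst (shift \<theta> c t) i' j) = (\<Sum>i'\<in>V0. x i' * fst \<theta> i' j + (if i' = i then x i * t else 0))" for t
    unfolding c by (intro sum.cong) (auto simp: algebra_simps)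
  then show thesis
    using assms(1) i by (intro that[of "x i"]) (simp add: c hidden_out_def sum.distrib add.assoc)
qed

lemma output_perturbation_differentiable:
  assumes "finite V0" "finite V1" "V0 \<inter> V1 = {}" "V1 \<inter> V2 = {}" "V2 = {l}" "c \<in> coords V0 V1 V2"
    and \<psi>: "\<And>t. \<psi> differentiable (at t)"
  shows "output_perturbation V0 V1 V2 \<psi> \<theta> c l x differentiable (at 0)"
  using assms(6)[unfolded assms(5)]
proof (cases rule: coords_single_output_cases)
  case (incoming j)
  then obtain a where a: "\<And>t. hidden_out V0 \<psi> (shift \<theta> c t) j x = \<psi> (snd \<theta> j + (\<Sum>i\<in>V0. x i * fst \<theta> i j) + a * t)"
    using hidden_out_shift_incoming[OF assms(1)] by blast
  let ?p = "snd \<theta> j + (\<Sum>i\<in>V0. x i * fst \<theta> i j)"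
  have "output_perturbation V0 V1 V2 \<psi> \<theta> c l x = (\<lambda>t. (\<psi> (?p + a * t) - hidden_out V0 \<psi> \<theta> j x) * fst \<theta> j l)"
    using incoming assms(2-5) by (simp add: output_perturbation_incoming a fun_eq_iff)
  moreover have "(\<psi> \<circ> (\<lambda>t. ?p + a * t)) differentiable (at 0)"
    by (intro differentiable_chain_at differentiable_add differentiable_mult differentiable_const
        differentiable_ident \<psi>)
  ultimately show ?thesis
    by (simp add: o_def differentiable_mult differentiable_diff)
next
  case (outgoing j)
  then have "output_perturbation V0 V1 V2 \<psi> \<theta> c l x = (\<lambda>t. hidden_out V0 \<psi> \<theta> j x * t)"
    using assms(2-5) by (simp add: output_perturbation_outgoing fun_eq_iff)
  then show ?thesis
    by (simp add: differentiable_mult differentiable_ident)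
next
  case output_bias
  then have "output_perturbation V0 V1 V2 \<psi> \<theta> c l x = (\<lambda>t. t)"
    using assms(4,5) by (simp add: output_perturbation_output_bias fun_eq_iff)
  then show ?thesis
    by (simp add: differentiable_ident)
qed

lemma output_perturbation_proportional:
  assumes "finite V1" "V1' \<subseteq> V1" "V0 \<inter> V1 = {}" "V1 \<inter> V2 = {}" "V2 = {l}"
    and hid: "same_hidden_layer V0 V1' \<theta> \<theta>'" and nz: "\<And>j. j \<in> V1' \<Longrightarrow> fst \<theta> j l \<noteq> 0"
    and "c \<in> coords V0 V1' V2"
  obtains \<kappa> where "\<And>x t. output_perturbation V0 V1' V2 \<psi> \<theta>' c l x t = \<kappa> * output_perturbation V0 V1 V2 \<psi> \<theta> c l x t"
proof -
  have V1': "finite V1'" "V0 \<inter> V1' = {}" "V1' \<inter> V2 = {}"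
    using assms(1-4) finite_subset by auto
  from assms(8)[unfolded assms(5)] show thesis
  proof (cases rule: coords_single_output_cases)
    case (incoming j)
    have "hidden_out V0 \<psi> (shift \<theta>' c t) j x = hidden_out V0 \<psi> (shift \<theta> c t) j x" for x t
      using hidden_out_cong[OF same_hidden_layer_shift[OF hid]] incoming(1) .
    moreover have "hidden_out V0 \<psi> \<theta>' j x = hidden_out V0 \<psi> \<theta> j x" for x
      using hidden_out_cong[OF hid] incoming(1) .
    ultimately show thesis
      using incoming assms(1-5) V1' nz[OF incoming(1)]
      by (intro that[of "fst \<theta>' j l / fst \<theta> j l"]) (auto simp: output_perturbation_incoming)
  next
    case (outgoing j)
    then show thesis
      using assms(1-5) V1' hidden_out_cong[OF hid]
      by (intro that[of 1]) (auto simp: output_perturbation_outgoing)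
  next
    case output_bias
    then show thesis
      using assms(4,5) V1' by (intro that[of 1]) (simp add: output_perturbation_output_bias)
  qed
qed

lemma DERIV_comp_scaled_eq:
  fixes L \<delta> :: "real \<Rightarrow> real"
  assumes L: "L differentiable (at 0)" and \<delta>: "\<delta> differentiable (at 0)" "\<delta> 0 = 0"
    and D: "((\<lambda>t. L (\<delta> t)) has_real_derivative D) (at 0)"
    and D': "((\<lambda>t. L (\<kappa> * \<delta> t)) has_real_derivative D') (at 0)"
  shows "D' = \<kappa> * D"
proof -
  obtain L' d where L': "(L has_real_derivative L') (at 0)" and d: "(\<delta> has_real_derivative d) (at 0)"
    using L \<delta>(1) by (auto simp: real_differentiable_def)
  have "D = L' * d"
    using DERIV_chain2[OF _ d, of L L'] L' \<delta>(2) D by (auto intro: DERIV_unique)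
  moreover have "D' = L' * (\<kappa> * d)"
    using DERIV_chain2[OF _ DERIV_cmult[OF d, of \<kappa>], of L L'] L' \<delta>(2) D' by (auto intro: DERIV_unique)
  ultimately show ?thesis
    by simp
qed

lemma loss_derivative_scaled:
  assumes V2: "V2 = {l}"
    and same_response: "response V0 V1' V2 \<psi> \<theta>' x = response V0 V1 V2 \<psi> \<theta> x"
    and loss: "\<And>u. (\<lambda>s. loss (u(l := u l + s)) y) differentiable (at 0)"
    and \<delta>: "output_perturbation V0 V1 V2 \<psi> \<theta> c l x differentiable (at 0)"
    and \<kappa>: "\<And>t. output_perturbation V0 V1' V2 \<psi> \<theta>' c l x t = \<kappa> * output_perturbation V0 V1 V2 \<psi> \<theta> c l x t"
    and D: "((\<lambda>t. loss (response V0 V1 V2 \<psi> (shift \<theta> c t) x) y) has_real_derivative D) (at 0)"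
    and D': "((\<lambda>t. loss (response V0 V1' V2 \<psi> (shift \<theta>' c t) x) y) has_real_derivative D') (at 0)"
  shows "D' = \<kappa> * D"
proof -
  define u where "u = response V0 V1 V2 \<psi> \<theta> x"
  define L where "L s = loss (u(l := u l + s)) y" for s
  show ?thesis
  proof (rule DERIV_comp_scaled_eq[where L = L])
    show "L differentiable (at 0)"
      unfolding L_def by (rule loss)
    show "output_perturbation V0 V1 V2 \<psi> \<theta> c l x 0 = 0"
      by (simp add: output_perturbation_def)
    show "((\<lambda>t. L (output_perturbation V0 V1 V2 \<psi> \<theta> c l x t)) has_real_derivative D) (at 0)"
      using D by (simp add: L_def u_def response_shift_single_output[OF V2])
    show "((\<lambda>t. L (\<kappa> * output_perturbation V0 V1 V2 \<psi> \<theta> c l x t)) has_real_derivative D') (at 0)"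
      using D' by (simp add: L_def u_def response_shift_single_output[OF V2] same_response \<kappa>)
  qed (rule \<delta>)
qed

lemma critical_point_of_proportional_perturbations:
  assumes V2: "V2 = {l}"
    and same_response: "AE z in M. response V0 V1' V2 \<psi> \<theta>' (fst z) = response V0 V1 V2 \<psi> \<theta> (fst z)"
    and loss: "\<And>u y. (\<lambda>s. loss (u(l := u l + s)) y) differentiable (at 0)"
    and interchange: "deriv_interchange V0 V1 V2 \<psi> loss M" "deriv_interchange V0 V1' V2 \<psi> loss M"
    and crit: "critical_point V0 V1 V2 \<psi> loss M \<theta>"
    and coords: "coords V0 V1' V2 \<subseteq> coords V0 V1 V2"
    and \<delta>: "\<And>c x. c \<in> coords V0 V1 V2 \<Longrightarrow> output_perturbation V0 V1 V2 \<psi> \<theta> c l x differentiable (at 0)"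
    and proportional: "\<And>c. c \<in> coords V0 V1' V2 \<Longrightarrow> \<exists>\<kappa>. \<forall>x t.
          output_perturbation V0 V1' V2 \<psi> \<theta>' c l x t = \<kappa> * output_perturbation V0 V1 V2 \<psi> \<theta> c l x t"
  shows "critical_point V0 V1' V2 \<psi> loss M \<theta>'"
  unfolding critical_point_def
proof
  fix c assume c': "c \<in> coords V0 V1' V2"
  with coords have c: "c \<in> coords V0 V1 V2" by blast
  obtain \<kappa> where \<kappa>: "\<And>x t. output_perturbation V0 V1' V2 \<psi> \<theta>' c l x t = \<kappa> * output_perturbation V0 V1 V2 \<psi> \<theta> c l x t"
    using proportional[OF c'] by blast
  obtain D where D: "\<forall>z\<in>space M. ((\<lambda>t. loss (response V0 V1 V2 \<psi> (shift \<theta> c t) (fst z)) (snd z))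
        has_real_derivative D z) (at 0)" "integrable M D"
      "((\<lambda>t. cost V0 V1 V2 \<psi> loss M (shift \<theta> c t)) has_real_derivative (\<integral>z. D z \<partial>M)) (at 0)"
    using interchange(1) c unfolding deriv_interchange_def by blast
  obtain D' where D': "\<forall>z\<in>space M. ((\<lambda>t. loss (response V0 V1' V2 \<psi> (shift \<theta>' c t) (fst z)) (snd z))
        has_real_derivative D' z) (at 0)" "integrable M D'"
      "((\<lambda>t. cost V0 V1' V2 \<psi> loss M (shift \<theta>' c t)) has_real_derivative (\<integral>z. D' z \<partial>M)) (at 0)"
    using interchange(2) c' unfolding deriv_interchange_def by blast
  have "(\<integral>z. D z \<partial>M) = 0"
    using DERIV_unique[OF D(3)] crit c unfolding critical_point_def by blast
  have "AE z in M. D' z = \<kappa> * D z"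
    using same_response AE_space
  proof eventually_elim
    case (elim z)
    then show ?case
      using D(1) D'(1) by (intro loss_derivative_scaled[OF V2 _ loss \<delta>[OF c] \<kappa>]) auto
  qed
  then have "(\<integral>z. D' z \<partial>M) = (\<integral>z. \<kappa> * D z \<partial>M)"
    using D(2) D'(2) by (intro integral_cong_AE) auto
  with D'(3) \<open>(\<integral>z. D z \<partial>M) = 0\<close>
  show "((\<lambda>t. cost V0 V1' V2 \<psi> loss M (shift \<theta>' c t)) has_real_derivative 0) (at 0)"
    by simp
qed

lemma critical_point_of_pruned:
  assumes "finite V0" "finite V1" "V0 \<inter> V1 = {}" "V1 \<inter> V2 = {}" and V2: "V2 = {l}" and "V1' \<subseteq> V1"
    and hid: "same_hidden_layer V0 V1' \<theta> \<theta>'" and active: "\<And>j. j \<in> V1' \<Longrightarrow> fst \<theta> j l \<noteq> 0"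
    and same_response: "AE z in M. response V0 V1' V2 \<psi> \<theta>' (fst z) = response V0 V1 V2 \<psi> \<theta> (fst z)"
    and \<psi>: "\<And>t. \<psi> differentiable (at t)"
    and loss: "\<And>u y. (\<lambda>s. loss (u(l := u l + s)) y) differentiable (at 0)"
    and interchange: "deriv_interchange V0 V1 V2 \<psi> loss M" "deriv_interchange V0 V1' V2 \<psi> loss M"
    and crit: "critical_point V0 V1 V2 \<psi> loss M \<theta>"
  shows "critical_point V0 V1' V2 \<psi> loss M \<theta>'"
  using V2 same_response loss interchange crit
proof (rule critical_point_of_proportional_perturbations)
  show "coords V0 V1' V2 \<subseteq> coords V0 V1 V2"
    using \<open>V1' \<subseteq> V1\<close> by (rule coords_mono)
  show "output_perturbation V0 V1 V2 \<psi> \<theta> c l x differentiable (at 0)" if "c \<in> coords V0 V1 V2" for c x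
    using assms(1-5) that \<psi> by (rule output_perturbation_differentiable)
  show "\<exists>\<kappa>. \<forall>x t. output_perturbation V0 V1' V2 \<psi> \<theta>' c l x t
                   = \<kappa> * output_perturbation V0 V1 V2 \<psi> \<theta> c l x t" if "c \<in> coords V0 V1' V2" for c
    using output_perturbation_proportional[OF assms(2,6,3,4) V2 hid active that] by metis
qed

theorem proposition6p5:
  fixes V0 V1 V2 :: "'n set" and \<psi> :: "real \<Rightarrow> real" and \<theta> :: "'n param"
    and M :: "(('n \<Rightarrow> real) \<times> 'y) measure" and Ny :: "'y measure"
    and loss :: "('n \<Rightarrow> real) \<Rightarrow> 'y \<Rightarrow> real"
  assumes "finite V0" and "finite V1" and "finite V2"
    and "V0 \<inter> V1 = {}" and "V0 \<inter> V2 = {}" and "V1 \<inter> V2 = {}"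
    and "prob_space M"
    and "sets M = sets (PiM V0 (\<lambda>_. borel) \<Otimes>\<^sub>M Ny)"
    and "redundant V0 V1 V2 \<psi> (input_support M V0) \<theta>"
  shows "\<exists>V1' \<theta>'. V1' \<subseteq> V1
           \<and> efficient V0 V1' V2 \<psi> (input_support M V0) \<theta>'
           \<and> (\<forall>x\<in>input_support M V0. response V0 V1 V2 \<psi> \<theta> x = response V0 V1' V2 \<psi> \<theta>' x)
           \<and> ((card V2 = 1
                \<and> (\<forall>t. \<psi> differentiable (at t))
                \<and> (\<forall>u y. \<forall>l\<in>V2. (\<lambda>s. loss (u(l := u l + s)) y) differentiable (at 0))
                \<and> (\<forall>V1''. V1'' \<subseteq> V1 \<longrightarrow> deriv_interchange V0 V1'' V2 \<psi> loss M)
                \<and> critical_point V0 V1 V2 \<psi> loss M \<theta>)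
              \<longrightarrow> critical_point V0 V1' V2 \<psi> loss M \<theta>')"
proof -
  obtain V1' \<theta>' where V1': "V1' \<subseteq> V1" "efficient V0 V1' V2 \<psi> (input_support M V0) \<theta>'"
    and same_response: "\<And>x. x \<in> input_support M V0 \<Longrightarrow> response V0 V1 V2 \<psi> \<theta> x = response V0 V1' V2 \<psi> \<theta>' x"
    and hid: "same_hidden_layer V0 V1' \<theta> \<theta>'" and active: "\<And>j. j \<in> V1' \<Longrightarrow> \<exists>l\<in>V2. fst \<theta> j l \<noteq> 0"
    using efficient_pruning[OF assms(2,4,6), where \<psi> = \<psi> and X = "input_support M V0" and \<theta> = \<theta>]
    by blast
  have "critical_point V0 V1' V2 \<psi> loss M \<theta>'"
    if "card V2 = 1" "\<forall>t. \<psi> differentiable (at t)"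
      "\<forall>u y. \<forall>l\<in>V2. (\<lambda>s. loss (u(l := u l + s)) y) differentiable (at 0)"
      "\<forall>V1''. V1'' \<subseteq> V1 \<longrightarrow> deriv_interchange V0 V1'' V2 \<psi> loss M"
      "critical_point V0 V1 V2 \<psi> loss M \<theta>"
  proof -
    obtain l where V2: "V2 = {l}"
      using \<open>card V2 = 1\<close> by (auto simp: card_1_singleton_iff)
    have "fst \<in> M \<rightarrow>\<^sub>M PiM V0 (\<lambda>_. borel)"
      using measurable_cong_sets[OF assms(8) refl] measurable_fst by blast
    from AE_input_support[OF assms(1) this]
    have "AE z in M. response V0 V1' V2 \<psi> \<theta>' (fst z) = response V0 V1 V2 \<psi> \<theta> (fst z)"
      by eventually_elim (simp add: same_response)
    with that V1'(1) V2 active show ?thesis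
      by (intro critical_point_of_pruned[OF assms(1,2,4,6) V2 V1'(1) hid]) auto
  qed
  with V1' same_response show ?thesis
    by blast
qed

end
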